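(* Let $X$ be a Banach space over $\mathbb{K}$. If there exists a Banach space $Y\neq\{0\}$ over $\mathbb{K}$ such that the pair $(X,Y)$ has the uniform sBPBp, then the pair $(X,\mathbb{K})$ has the uniform sBPBp (with the same function $\eta(\varepsilon)$).
   Context: $\mathbb{K}=\mathbb{R}$ or $\mathbb{C}$. $S_X$ denotes the unit sphere of $X$ and $\mathcal{L}(X,Y)$ the space of bounded linear operators from $X$ to $Y$ with the operator norm; $\mathcal{L}(X,\mathbb{K})=X^*$. A pair of Banach spaces $(X,Y)$ has the uniform strong Bishop–Phelps–Bollobás property (uniform sBPBp) if for every $\varepsilon>0$ there exists $\eta(\varepsilon)>0$ such that whenever $T\in\mathcal{L}(X,Y)$ with $\|T\|=1$ and $x_0\in S_X$ satisfy $\|T(x_0)\|>1-\eta(\varepsilon)$, there exists $x_1\in S_X$ with $\|T(x_1)\|=1$ and $\|x_1-x_0\|<\varepsilon$. *)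

theory Defs
  imports "HOL-Analysis.Analysis"
begin

text \<open>A complex Banach space is modelled as a real Banach space (type class banach)
  together with a complex scalar multiplication compatible with the real one and
  with the norm.\<close>
definition cplx_scale :: "(complex \<Rightarrow> 'a::real_normed_vector \<Rightarrow> 'a) \<Rightarrow> bool" where
  "cplx_scale sc \<longleftrightarrow>
     (\<forall>a b x. sc (a + b) x = sc a x + sc b x) \<and>
     (\<forall>a x y. sc a (x + y) = sc a x + sc a y) \<and>
     (\<forall>a b x. sc (a * b) x = sc a (sc b x)) \<and>
     (\<forall>x. sc 1 x = x) \<and>
     (\<forall>a x. norm (sc a x) = cmod a * norm x) \<and>
     (\<forall>r x. sc (complex_of_real r) x = scaleR r x)"

text \<open>Bounded K-linear operators = bounded (real-)linear maps commuting
  with the K-scalar multiplication; their operator norm is onorm.\<close>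
definition sBPBp_with ::
  "('k \<Rightarrow> 'x::real_normed_vector \<Rightarrow> 'x) \<Rightarrow> ('k \<Rightarrow> 'y::real_normed_vector \<Rightarrow> 'y)
    \<Rightarrow> (real \<Rightarrow> real) \<Rightarrow> bool" where
  "sBPBp_with scX scY eta \<longleftrightarrow>
     (\<forall>\<epsilon>>0. eta \<epsilon> > 0 \<and>
        (\<forall>T x0. bounded_linear T \<and> (\<forall>c x. T (scX c x) = scY c (T x)) \<and>
                onorm T = 1 \<and> norm x0 = 1 \<and> norm (T x0) > 1 - eta \<epsilon> \<longrightarrow>
           (\<exists>x1. norm x1 = 1 \<and> norm (T x1) = 1 \<and> norm (x1 - x0) < \<epsilon>)))"

end

theory Submission
  imports Defs
begin

text \<open>Fix a unit vector y0 in Y. A norm-one functional f on X becomes the norm-one operator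
  x \<mapsto> f x \<cdot> y0 with the same norms \<parallel>T x\<parallel> = |f x|; applying the sBPBp of (X,Y) to it
  yields a point x1 near x0 with \<parallel>T x1\<parallel> = 1, i.e. |f x1| = 1. The real and the complex case
  are treated uniformly by letting the scalars range over a normed algebra acting on Y.\<close>

lemma onorm_cong_norm:
  assumes "\<And>x. norm (T x) = norm (f x)"
  shows "onorm T = onorm f"
  unfolding onorm_def using assms by simp

lemma sBPBp_with_norm_preserving_lift:
  assumes sBPBp: "sBPBp_with scX scY eta"
    and lift: "\<And>f. bounded_linear f \<Longrightarrow> (\<forall>c x. f (scX c x) = scZ c (f x)) \<Longrightarrow>
      \<exists>T. bounded_linear T \<and> (\<forall>c x. T (scX c x) = scY c (T x)) \<and> (\<forall>x. norm (T x) = norm (f x))"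
  shows "sBPBp_with scX scZ eta"
  unfolding sBPBp_with_def
proof (intro allI impI conjI)
  fix e :: real
  assume e: "e > 0"
  then show "eta e > 0" using sBPBp unfolding sBPBp_with_def by blast
  fix f x0
  assume f: "bounded_linear f \<and> (\<forall>c x. f (scX c x) = scZ c (f x)) \<and> onorm f = 1 \<and>
    norm x0 = 1 \<and> norm (f x0) > 1 - eta e"
  then obtain T where T: "bounded_linear T" "\<forall>c x. T (scX c x) = scY c (T x)"
    and norm_T: "\<And>x. norm (T x) = norm (f x)"
    using lift by blast
  have "onorm T = 1" using onorm_cong_norm[of T f] norm_T f by simp
  then obtain x1 where "norm x1 = 1" "norm (T x1) = 1" "norm (x1 - x0) < e"
    using sBPBp e f T norm_T unfolding sBPBp_with_def by metis
  then show "\<exists>x1. norm x1 = 1 \<and> norm (f x1) = 1 \<and> norm (x1 - x0) < e"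
    using norm_T by metis
qed

lemma bounded_linear_scale_fixed_vector:
  fixes sc :: "'k::real_normed_vector \<Rightarrow> 'y::real_normed_vector \<Rightarrow> 'y"
  assumes add: "\<And>a b y. sc (a + b) y = sc a y + sc b y"
    and scaleR: "\<And>r a y. sc (r *\<^sub>R a) y = r *\<^sub>R sc a y"
    and norm: "\<And>a y. norm (sc a y) = norm a * norm y"
    and f: "bounded_linear f"
  shows "bounded_linear (\<lambda>x. sc (f x) y0)"
proof
  interpret f: bounded_linear f by (fact f)
  fix x y r
  show "sc (f (x + y)) y0 = sc (f x) y0 + sc (f y) y0" by (simp add: f.add add)
  show "sc (f (r *\<^sub>R x)) y0 = r *\<^sub>R sc (f x) y0" by (simp add: f.scaleR scaleR)
  obtain K where "\<And>x. norm (f x) \<le> norm x * K" using f.bounded by blast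
  then have "norm (sc (f x) y0) \<le> norm x * (K * norm y0)" for x
    by (simp add: norm mult.assoc [symmetric] mult_right_mono)
  then show "\<exists>K. \<forall>x. norm (sc (f x) y0) \<le> norm x * K" by blast
qed

lemma sBPBp_with_scalar_field:
  fixes scY :: "'k::real_normed_algebra_1 \<Rightarrow> 'y::real_normed_vector \<Rightarrow> 'y"
  assumes add: "\<And>a b y. scY (a + b) y = scY a y + scY b y"
    and scaleR: "\<And>r a y. scY (r *\<^sub>R a) y = r *\<^sub>R scY a y"
    and mult: "\<And>a b y. scY (a * b) y = scY a (scY b y)"
    and norm: "\<And>a y. norm (scY a y) = norm a * norm y"
    and nontrivial: "\<exists>y::'y. y \<noteq> 0"
    and sBPBp: "sBPBp_with scX scY eta"
  shows "sBPBp_with scX (\<lambda>c z::'k. c * z) eta"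
proof (rule sBPBp_with_norm_preserving_lift[OF sBPBp])
  obtain y :: 'y where "y \<noteq> 0" using nontrivial by blast
  define y0 where "y0 = y /\<^sub>R norm y"
  have y0: "norm y0 = 1" using \<open>y \<noteq> 0\<close> by (simp add: y0_def)
  fix f
  assume "bounded_linear f" and f: "\<forall>c x. f (scX c x) = c * f x"
  let ?T = "\<lambda>x. scY (f x) y0"
  have "bounded_linear ?T"
    using bounded_linear_scale_fixed_vector[OF add scaleR norm \<open>bounded_linear f\<close>] .
  moreover have "\<forall>c x. ?T (scX c x) = scY c (?T x)" by (simp add: f mult)
  moreover have "\<forall>x. norm (?T x) = norm (f x)" by (simp add: norm y0)
  ultimately show "\<exists>T. bounded_linear T \<and> (\<forall>c x. T (scX c x) = scY c (T x)) \<and>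
      (\<forall>x. norm (T x) = norm (f x))" by blast
qed

lemma cplx_scale_scaleR:
  assumes "cplx_scale sc"
  shows "sc (r *\<^sub>R a) y = r *\<^sub>R sc a y"
  using assms unfolding cplx_scale_def by (metis scaleR_conv_of_real)

theorem mainTheorem6:
  shows "(\<forall>eta. (\<exists>y::'y::banach. y \<noteq> 0) \<and>
            sBPBp_with (scaleR :: real \<Rightarrow> 'x::banach \<Rightarrow> 'x) (scaleR :: real \<Rightarrow> 'y \<Rightarrow> 'y) eta
          \<longrightarrow> sBPBp_with (scaleR :: real \<Rightarrow> 'x \<Rightarrow> 'x) (scaleR :: real \<Rightarrow> real \<Rightarrow> real) eta)
       \<and> (\<forall>scX scY eta. cplx_scale (scX :: complex \<Rightarrow> 'x \<Rightarrow> 'x) \<and>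
            cplx_scale (scY :: complex \<Rightarrow> 'y \<Rightarrow> 'y) \<and> (\<exists>y::'y. y \<noteq> 0) \<and>
            sBPBp_with scX scY eta
          \<longrightarrow> sBPBp_with scX (\<lambda>c z::complex. c * z) eta)"
proof (intro conjI allI impI; elim conjE)
  fix eta
  assume "\<exists>y::'y. y \<noteq> 0" "sBPBp_with (scaleR :: real \<Rightarrow> 'x \<Rightarrow> 'x) (scaleR :: real \<Rightarrow> 'y \<Rightarrow> 'y) eta"
  then have "sBPBp_with (scaleR :: real \<Rightarrow> 'x \<Rightarrow> 'x) (\<lambda>c z::real. c * z) eta"
    by (intro sBPBp_with_scalar_field[of "scaleR :: real \<Rightarrow> 'y \<Rightarrow> 'y"])
      (auto simp: scaleR_left_distrib)
  moreover have "(scaleR :: real \<Rightarrow> real \<Rightarrow> real) = (\<lambda>c z. c * z)" by (rule ext)+ simp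
  ultimately show "sBPBp_with (scaleR :: real \<Rightarrow> 'x \<Rightarrow> 'x) (scaleR :: real \<Rightarrow> real \<Rightarrow> real) eta"
    by (simp only:)
next
  fix scX :: "complex \<Rightarrow> 'x \<Rightarrow> 'x" and scY :: "complex \<Rightarrow> 'y \<Rightarrow> 'y" and eta
  assume "cplx_scale (scY :: complex \<Rightarrow> 'y \<Rightarrow> 'y)" "\<exists>y::'y. y \<noteq> 0" "sBPBp_with scX scY eta"
  then show "sBPBp_with scX (\<lambda>c z::complex. c * z) eta"
    using sBPBp_with_scalar_field[of scY] cplx_scale_scaleR
    unfolding cplx_scale_def by blast
qed

end
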